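(* Let $f:\mathbb{R}^d\to\mathbb{R}$ be smooth, let $K\subseteq\mathbb{R}^d$ be compact and let $M=(M_k)$ be a positive sequence. The following are equivalent: (1) there exist $C,\rho>0$ such that $|d_v^kf(x)|\le C\rho^kk!\,M_k$ for all $k\in\mathbb{N}$, $x\in K$, $v\in S^{d-1}$; (2) there exist $v_0\in S^{d-1}$ and $r>0$, and $C,\rho>0$, such that $|d_v^kf(x)|\le C\rho^kk!\,M_k$ for all $k\in\mathbb{N}$, $x\in K$, $v\in B(v_0,r)\cap S^{d-1}$; (3) there exist $C,\rho>0$ such that $|\partial^\alpha f(x)|\le C\rho^{|\alpha|}|\alpha|!\,M_{|\alpha|}$ for all $x\in K$, $\alpha\in\mathbb{N}^d$. The constants $C,\rho$ may differ from item to item, but they change in a uniform way which depends only on $r$.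
   Context: $d_v^kf$ denotes the $k$-th directional derivative of $f$ in direction $v$; $S^{d-1}$ is the unit sphere and $B(v_0,r)$ the open Euclidean ball of radius $r$ centered at $v_0$. *)

theory Defs
  imports "HOL-Analysis.Analysis"
begin

definition dir_deriv :: "(real^'n \<Rightarrow> real) \<Rightarrow> real^'n \<Rightarrow> real^'n \<Rightarrow> real" where
  "dir_deriv g v x = deriv (\<lambda>t. g (x + t *\<^sub>R v)) 0"

definition partial :: "'n::finite \<Rightarrow> (real^'n \<Rightarrow> real) \<Rightarrow> real^'n \<Rightarrow> real" where
  "partial i g = dir_deriv g (axis i 1)"

definition iter_partial :: "'n::finite list \<Rightarrow> (real^'n \<Rightarrow> real) \<Rightarrow> real^'n \<Rightarrow> real" where
  "iter_partial is g = foldr partial is g"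

definition smooth :: "(real^'n::finite \<Rightarrow> real) \<Rightarrow> bool" where
  "smooth f \<longleftrightarrow> (\<forall>is. continuous_on UNIV (iter_partial is f) \<and>
      (\<forall>i x. (\<lambda>t. iter_partial is f (x + t *\<^sub>R axis i 1)) differentiable (at 0)))"

definition dir_deriv_k :: "nat \<Rightarrow> (real^'n \<Rightarrow> real) \<Rightarrow> real^'n \<Rightarrow> real^'n \<Rightarrow> real" where
  "dir_deriv_k k f v x = (deriv ^^ k) (\<lambda>t. f (x + t *\<^sub>R v)) 0"

text \<open>Multi-index partial derivative \<partial>^\<alpha> f, computed along some list of indices in which
  each coordinate i occurs exactly \<alpha> i times (for smooth f the order is irrelevant).\<close>
definition partial_alpha :: "('n::finite \<Rightarrow> nat) \<Rightarrow> (real^'n \<Rightarrow> real) \<Rightarrow> real^'n \<Rightarrow> real" where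
  "partial_alpha \<alpha> f = iter_partial (SOME is. \<forall>i. count_list is i = \<alpha> i) f"

definition mi_abs :: "('n::finite \<Rightarrow> nat) \<Rightarrow> nat" where
  "mi_abs \<alpha> = (\<Sum>i\<in>UNIV. \<alpha> i)"

definition cond1 :: "(real^'n::finite \<Rightarrow> real) \<Rightarrow> (real^'n) set \<Rightarrow> (nat \<Rightarrow> real) \<Rightarrow> real \<Rightarrow> real \<Rightarrow> bool" where
  "cond1 f K M C \<rho> \<longleftrightarrow> C > 0 \<and> \<rho> > 0 \<and>
     (\<forall>k. \<forall>x\<in>K. \<forall>v\<in>sphere 0 1. \<bar>dir_deriv_k k f v x\<bar> \<le> C * \<rho> ^ k * fact k * M k)"

definition cond2 :: "(real^'n::finite \<Rightarrow> real) \<Rightarrow> (real^'n) set \<Rightarrow> (nat \<Rightarrow> real) \<Rightarrow> real^'n \<Rightarrow> real \<Rightarrow> real \<Rightarrow> real \<Rightarrow> bool" where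
  "cond2 f K M v0 r C \<rho> \<longleftrightarrow> v0 \<in> sphere 0 1 \<and> r > 0 \<and> C > 0 \<and> \<rho> > 0 \<and>
     (\<forall>k. \<forall>x\<in>K. \<forall>v\<in>ball v0 r \<inter> sphere 0 1. \<bar>dir_deriv_k k f v x\<bar> \<le> C * \<rho> ^ k * fact k * M k)"

definition cond3 :: "(real^'n::finite \<Rightarrow> real) \<Rightarrow> (real^'n) set \<Rightarrow> (nat \<Rightarrow> real) \<Rightarrow> real \<Rightarrow> real \<Rightarrow> bool" where
  "cond3 f K M C \<rho> \<longleftrightarrow> C > 0 \<and> \<rho> > 0 \<and>
     (\<forall>x\<in>K. \<forall>\<alpha>. \<bar>partial_alpha \<alpha> f x\<bar> \<le> C * \<rho> ^ mi_abs \<alpha> * fact (mi_abs \<alpha>) * M (mi_abs \<alpha>))"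

end

theory Submission
  imports Defs
begin

text \<open>For smooth f, Clairaut's theorem makes \<open>d\<^sub>v\<^sup>k f(x)\<close> the diagonal value \<open>T(v, \<dots>, v)\<close> of the
  symmetric k-linear form \<open>T(w\<^sub>1, \<dots>, w\<^sub>k) = \<Sum> w\<^sub>1\<^sub>i\<^sub>1 \<dots> w\<^sub>k\<^sub>i\<^sub>k \<partial>\<^sub>i\<^sub>1 \<dots> \<partial>\<^sub>i\<^sub>k f(x)\<close>.
  (3) \<Longrightarrow> (1): expanding \<open>T(v, \<dots>, v)\<close> costs a factor \<open>|v|\<^sub>1\<^sup>k \<le> d\<^sup>k\<close>.
  (1) \<Longrightarrow> (2) is trivial.
  (2) \<Longrightarrow> (3): by homogeneity the bound on \<open>T(u, \<dots>, u)\<close> extends, up to \<open>(1 + \<delta>)\<^sup>k\<close>, to the ball of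
  radius \<open>\<delta>\<close> around \<open>v\<^sub>0\<close>; by polarization, \<open>k! (\<delta>/k)\<^sup>k \<partial>\<^sup>\<alpha> f(x)\<close> is a k-th finite difference of
  \<open>u \<mapsto> T(u, \<dots>, u)\<close> at \<open>v\<^sub>0\<close> with steps \<open>(\<delta>/k) e\<^sub>i\<close> inside that ball, hence bounded by \<open>2\<^sup>k\<close> times the
  bound there, and \<open>k\<^sup>k \<le> e\<^sup>k k!\<close> absorbs the rest.\<close>

lemma iter_partial_Nil [simp]: "iter_partial [] g = g"
  by (simp add: iter_partial_def)

lemma iter_partial_Cons [simp]: "iter_partial (i # is) g = partial i (iter_partial is g)"
  by (simp add: iter_partial_def)

lemma iter_partial_append: "iter_partial (xs @ ys) g = iter_partial xs (iter_partial ys g)"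
  by (simp add: iter_partial_def)

lemma smooth_iter_partial: "smooth g \<Longrightarrow> smooth (iter_partial js g)"
  unfolding smooth_def by (simp add: iter_partial_append[symmetric])

lemma smooth_partial: "smooth g \<Longrightarrow> smooth (partial i g)"
  using smooth_iter_partial[of g "[i]"] by simp

lemma smooth_imp_continuous_on: "smooth g \<Longrightarrow> continuous_on UNIV g"
  unfolding smooth_def by (metis iter_partial_Nil)

lemma has_real_derivative_partial:
  assumes "smooth g"
  shows "((\<lambda>s. g (w + s *\<^sub>R axis i 1)) has_real_derivative partial i g (w + s0 *\<^sub>R axis i 1)) (at s0)"
proof -
  let ?z = "w + s0 *\<^sub>R axis i 1"
  have "(\<lambda>t. g (?z + t *\<^sub>R axis i 1)) differentiable (at 0)"
    using assms unfolding smooth_def by (metis iter_partial_Nil)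
  then have "((\<lambda>t. g (?z + t *\<^sub>R axis i 1)) has_real_derivative partial i g ?z) (at 0)"
    unfolding partial_def dir_deriv_def by (simp add: DERIV_deriv_iff_real_differentiable)
  then have "((\<lambda>t. g (w + (t + s0) *\<^sub>R axis i 1)) has_real_derivative partial i g ?z) (at 0)"
    by (simp add: algebra_simps)
  then show ?thesis
    using DERIV_shift[of "\<lambda>s. g (w + s *\<^sub>R axis i 1)" _ 0 s0] by simp
qed

lemma second_difference_eq_mixed_partial:
  assumes "smooth g" "h > 0"
  obtains p where "norm (p - y) < 2 * h"
    "g (y + h *\<^sub>R axis i 1 + h *\<^sub>R axis j 1) - g (y + h *\<^sub>R axis i 1) - g (y + h *\<^sub>R axis j 1) + g y
      = h^2 * partial j (partial i g) p"
proof -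
  let ?ei = "axis i (1::real)" and ?ej = "axis j (1::real)"
  define \<phi> where "\<phi> s = g (y + h *\<^sub>R ?ej + s *\<^sub>R ?ei) - g (y + s *\<^sub>R ?ei)" for s
  have "(\<phi> has_real_derivative
          partial i g (y + h *\<^sub>R ?ej + s *\<^sub>R ?ei) - partial i g (y + s *\<^sub>R ?ei)) (at s)" for s
    unfolding \<phi>_def by (intro DERIV_diff has_real_derivative_partial assms(1))
  from MVT2[OF assms(2) this] obtain \<xi> where \<xi>: "0 < \<xi>" "\<xi> < h"
    "\<phi> h - \<phi> 0 = h * (partial i g (y + h *\<^sub>R ?ej + \<xi> *\<^sub>R ?ei) - partial i g (y + \<xi> *\<^sub>R ?ei))"
    by auto
  define \<psi> where "\<psi> s = partial i g (y + \<xi> *\<^sub>R ?ei + s *\<^sub>R ?ej)" for s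
  have "(\<psi> has_real_derivative partial j (partial i g) (y + \<xi> *\<^sub>R ?ei + s *\<^sub>R ?ej)) (at s)" for s
    unfolding \<psi>_def by (intro has_real_derivative_partial smooth_partial assms(1))
  from MVT2[OF assms(2) this] obtain \<eta> where \<eta>: "0 < \<eta>" "\<eta> < h"
    "\<psi> h - \<psi> 0 = h * partial j (partial i g) (y + \<xi> *\<^sub>R ?ei + \<eta> *\<^sub>R ?ej)"
    by auto
  define p where "p = y + \<xi> *\<^sub>R ?ei + \<eta> *\<^sub>R ?ej"
  have "norm (p - y) \<le> norm (\<xi> *\<^sub>R ?ei) + norm (\<eta> *\<^sub>R ?ej)"
    unfolding p_def by (metis add_diff_cancel_left' add.assoc norm_triangle_ineq)
  also have "\<dots> = \<xi> + \<eta>"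
    using \<xi> \<eta> by (simp add: norm_axis_1)
  finally have "norm (p - y) < 2 * h"
    using \<xi> \<eta> by simp
  moreover have "\<phi> h - \<phi> 0 = h^2 * partial j (partial i g) p"
    using \<xi>(3) \<eta>(3) unfolding \<psi>_def p_def by (simp add: algebra_simps power2_eq_square)
  moreover have "\<phi> h - \<phi> 0 = g (y + h *\<^sub>R ?ei + h *\<^sub>R ?ej) - g (y + h *\<^sub>R ?ei) - g (y + h *\<^sub>R ?ej) + g y"
    unfolding \<phi>_def by (simp add: algebra_simps)
  ultimately show ?thesis
    using that by metis
qed

text \<open>Clairaut: both mixed partials are limits of the same second difference quotient.\<close>
lemma partial_commute:
  assumes "smooth g"
  shows "partial i (partial j g) = partial j (partial i g)"
proof (rule ext, rule ccontr)
  fix y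
  let ?A = "partial i (partial j g)" and ?B = "partial j (partial i g)"
  assume ne: "?A y \<noteq> ?B y"
  define e where "e = \<bar>?A y - ?B y\<bar> / 2"
  have e: "e > 0"
    using ne by (simp add: e_def)
  have "isCont ?A y" "isCont ?B y"
    using smooth_imp_continuous_on[OF smooth_partial[OF smooth_partial[OF assms]]]
    by (simp_all add: continuous_on_eq_continuous_at)
  then obtain d1 d2 where d1: "d1 > 0" "\<And>x. dist x y < d1 \<Longrightarrow> dist (?A x) (?A y) < e"
      and d2: "d2 > 0" "\<And>x. dist x y < d2 \<Longrightarrow> dist (?B x) (?B y) < e"
    using e unfolding continuous_at_eps_delta by (metis (no_types))
  define h where "h = min d1 d2 / 2"
  have h: "h > 0"
    using d1 d2 by (simp add: h_def)
  obtain p where p: "norm (p - y) < 2 * h"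
    "g (y + h *\<^sub>R axis i 1 + h *\<^sub>R axis j 1) - g (y + h *\<^sub>R axis i 1) - g (y + h *\<^sub>R axis j 1) + g y
      = h^2 * ?B p"
    using second_difference_eq_mixed_partial[OF assms h] by blast
  obtain q where q: "norm (q - y) < 2 * h"
    "g (y + h *\<^sub>R axis j 1 + h *\<^sub>R axis i 1) - g (y + h *\<^sub>R axis j 1) - g (y + h *\<^sub>R axis i 1) + g y
      = h^2 * ?A q"
    using second_difference_eq_mixed_partial[OF assms h] by blast
  have "h^2 * ?B p = h^2 * ?A q"
    using p(2) q(2) by (simp add: algebra_simps)
  then have "?B p = ?A q"
    using h by simp
  moreover have "dist (?A q) (?A y) < e"
    using d1(2)[of q] q(1) by (simp add: dist_norm h_def)
  moreover have "dist (?B p) (?B y) < e"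
    using d2(2)[of p] p(1) by (simp add: dist_norm h_def)
  ultimately have "\<bar>?A y - ?B y\<bar> < 2 * e"
    by (simp add: dist_real_def)
  then show False
    by (simp add: e_def)
qed

lemma has_real_derivative_line_add_axis:
  assumes g: "smooth g" and D: "((\<lambda>t. g (x + t *\<^sub>R v)) has_real_derivative D) (at 0)"
  shows "((\<lambda>t. g (x + t *\<^sub>R (v + c *\<^sub>R axis a 1))) has_real_derivative D + c * partial a g x) (at 0)"
proof -
  let ?ea = "axis a (1::real)"
  define F where "F t1 t2 = g (x + t1 *\<^sub>R v + t2 *\<^sub>R ?ea)" for t1 t2 :: real
  define P where "P = (\<lambda>(t1::real, t2::real). partial a g (x + t1 *\<^sub>R v + t2 *\<^sub>R ?ea))"
  have Fx: "((\<lambda>t1. F t1 0) has_derivative (\<lambda>h. D * h)) (at 0 within UNIV)"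
    using D unfolding F_def has_field_derivative_def by simp
  have Fy: "((\<lambda>t2. F t1 t2) has_derivative blinfun_apply (blinfun_mult_right (P (t1, t2)))) (at t2 within UNIV)"
    for t1 t2
    using has_real_derivative_partial[OF g, of "x + t1 *\<^sub>R v" a t2]
    unfolding F_def P_def has_field_derivative_def by (simp add: mult.commute)
  have "continuous_on UNIV P"
    unfolding P_def case_prod_unfold
    by (rule continuous_on_compose2[OF smooth_imp_continuous_on[OF smooth_partial[OF g]]])
      (auto intro!: continuous_intros)
  then have "isCont (\<lambda>p. blinfun_mult_right (P p)) (0, 0)"
    by (intro continuous_intros) (simp add: continuous_on_eq_continuous_at)
  then have "continuous (at (0, 0) within UNIV \<times> UNIV) (\<lambda>(t1, t2). blinfun_mult_right (P (t1, t2)))"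
    by (simp add: case_prod_unfold)
  from has_derivative_partialsI[OF Fx Fy this]
  have F: "((\<lambda>(t1, t2). F t1 t2) has_derivative (\<lambda>(tx, ty). D * tx + P (0, 0) * ty)) (at (0, 0))"
    by simp
  have "((\<lambda>t::real. (t, c * t)) has_derivative (\<lambda>h. (h, c * h))) (at 0)"
    by (intro derivative_eq_intros) auto
  from diff_chain_at[OF this] F
  have "(((\<lambda>(t1, t2). F t1 t2) \<circ> (\<lambda>t. (t, c * t))) has_derivative
      ((\<lambda>(tx, ty). D * tx + P (0, 0) * ty) \<circ> (\<lambda>h. (h, c * h)))) (at 0)"
    by simp
  moreover have "(\<lambda>(t1, t2). F t1 t2) \<circ> (\<lambda>t. (t, c * t)) = (\<lambda>t. g (x + t *\<^sub>R (v + c *\<^sub>R ?ea)))"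
    by (rule ext) (simp add: F_def algebra_simps)
  moreover have "(\<lambda>(tx, ty). D * tx + P (0, 0) * ty) \<circ> (\<lambda>h. (h, c * h)) = (*) (D + c * partial a g x)"
    by (rule ext) (simp add: P_def algebra_simps)
  ultimately show ?thesis
    unfolding has_field_derivative_def by (simp only:)
qed

lemma has_real_derivative_line_supported:
  assumes g: "smooth g" and S: "finite S" and v: "\<forall>i. i \<notin> S \<longrightarrow> v$i = 0"
  shows "((\<lambda>t. g (x + t *\<^sub>R v)) has_real_derivative (\<Sum>i\<in>S. v$i * partial i g x)) (at 0)"
  using S v
proof (induction S arbitrary: v rule: finite_induct)
  case empty
  then have "v = 0"
    by (simp add: vec_eq_iff)
  then show ?case
    by simp
next
  case (insert a S)
  define v' where "v' = v - v$a *\<^sub>R axis a 1"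
  have "\<forall>i. i \<notin> S \<longrightarrow> v'$i = 0"
    using insert.prems by (simp add: v'_def axis_def)
  from has_real_derivative_line_add_axis[OF g insert.IH[OF this], of "v$a" a]
  have "((\<lambda>t. g (x + t *\<^sub>R v)) has_real_derivative
          (\<Sum>i\<in>S. v'$i * partial i g x) + v$a * partial a g x) (at 0)"
    by (simp add: v'_def)
  moreover have "(\<Sum>i\<in>S. v'$i * partial i g x) = (\<Sum>i\<in>S. v$i * partial i g x)"
    using insert.hyps(2) by (intro sum.cong) (auto simp: v'_def axis_def)
  ultimately show ?case
    using insert.hyps by (simp add: add.commute)
qed

lemma has_real_derivative_line:
  assumes "smooth g"
  shows "((\<lambda>t. g (x + t *\<^sub>R v)) has_real_derivative (\<Sum>i\<in>UNIV. v$i * partial i g (x + t0 *\<^sub>R v))) (at t0)"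
proof -
  have "((\<lambda>t. g ((x + t0 *\<^sub>R v) + t *\<^sub>R v)) has_real_derivative
          (\<Sum>i\<in>UNIV. v$i * partial i g (x + t0 *\<^sub>R v))) (at 0)"
    using has_real_derivative_line_supported[OF assms, of UNIV] by simp
  then have "((\<lambda>t. g (x + (t + t0) *\<^sub>R v)) has_real_derivative
          (\<Sum>i\<in>UNIV. v$i * partial i g (x + t0 *\<^sub>R v))) (at 0)"
    by (simp add: algebra_simps)
  then show ?thesis
    using DERIV_shift[of "\<lambda>t. g (x + t *\<^sub>R v)" _ 0 t0] by simp
qed

text \<open>\<open>iter_dir_deriv [w\<^sub>1, \<dots>, w\<^sub>k] g\<close> is the form T above, i.e. \<open>d\<^sub>w\<^sub>k \<dots> d\<^sub>w\<^sub>1 g\<close>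
  expanded in partial derivatives.\<close>
fun iter_dir_deriv :: "(real^'n) list \<Rightarrow> (real^'n \<Rightarrow> real) \<Rightarrow> real^'n \<Rightarrow> real" where
  "iter_dir_deriv [] g y = g y"
| "iter_dir_deriv (w # ws) g y = (\<Sum>i\<in>UNIV. w$i * iter_dir_deriv ws (partial i g) y)"

lemma has_real_derivative_iter_dir_deriv_replicate:
  assumes "smooth g"
  shows "((\<lambda>t. iter_dir_deriv (replicate k v) g (x + t *\<^sub>R v)) has_real_derivative
           iter_dir_deriv (replicate (Suc k) v) g (x + t *\<^sub>R v)) (at t)"
  using assms
proof (induction k arbitrary: g)
  case 0
  then show ?case
    using has_real_derivative_line[OF 0, of x v t] by simp
next
  case (Suc k)
  have "((\<lambda>t. \<Sum>i\<in>UNIV. v$i * iter_dir_deriv (replicate k v) (partial i g) (x + t *\<^sub>R v))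
          has_real_derivative
          (\<Sum>i\<in>UNIV. v$i * iter_dir_deriv (replicate (Suc k) v) (partial i g) (x + t *\<^sub>R v))) (at t)"
    by (intro DERIV_sum DERIV_cmult Suc.IH smooth_partial Suc.prems)
  then show ?case
    by simp
qed

lemma dir_deriv_k_eq_iter_dir_deriv:
  assumes "smooth g"
  shows "dir_deriv_k k g v x = iter_dir_deriv (replicate k v) g x"
proof -
  have "(deriv ^^ k) (\<lambda>t. g (x + t *\<^sub>R v)) = (\<lambda>t. iter_dir_deriv (replicate k v) g (x + t *\<^sub>R v))"
  proof (induction k)
    case (Suc k)
    then show ?case
      using DERIV_imp_deriv[OF has_real_derivative_iter_dir_deriv_replicate[OF assms]] by auto
  qed simp
  then show ?thesis
    unfolding dir_deriv_k_def by simp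
qed

lemma iter_dir_deriv_add:
  "iter_dir_deriv (pre @ (a + b) # post) g y = iter_dir_deriv (pre @ a # post) g y + iter_dir_deriv (pre @ b # post) g y"
  by (induction pre arbitrary: g) (simp_all add: sum.distrib algebra_simps)

lemma iter_dir_deriv_map_scaleR:
  "iter_dir_deriv (map ((*\<^sub>R) s) ws) g y = s ^ length ws * iter_dir_deriv ws g y"
  by (induction ws arbitrary: g) (simp_all add: sum_distrib_left algebra_simps)

lemma iter_dir_deriv_axis: "iter_dir_deriv (map (\<lambda>i. axis i 1) is) g y = iter_partial (rev is) g y"
proof (induction "is" arbitrary: g)
  case (Cons i "is")
  have "(\<Sum>j\<in>UNIV. axis i 1 $ j * iter_dir_deriv (map (\<lambda>i. axis i 1) is) (partial j g) y)
      = (\<Sum>j\<in>UNIV. if j = i then iter_dir_deriv (map (\<lambda>i. axis i 1) is) (partial j g) y else 0)"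
    by (intro sum.cong) (auto simp: axis_def)
  then show ?case
    using Cons.IH by (simp add: iter_partial_append)
qed simp

lemma iter_dir_deriv_swap:
  assumes "smooth g"
  shows "iter_dir_deriv (pre @ a # b # post) g y = iter_dir_deriv (pre @ b # a # post) g y"
  using assms
proof (induction pre arbitrary: g)
  case Nil
  have "iter_dir_deriv (a # b # post) g y
      = (\<Sum>i\<in>UNIV. \<Sum>j\<in>UNIV. a$i * b$j * iter_dir_deriv post (partial j (partial i g)) y)"
    by (simp add: sum_distrib_left algebra_simps)
  also have "\<dots> = (\<Sum>j\<in>UNIV. \<Sum>i\<in>UNIV. a$i * b$j * iter_dir_deriv post (partial i (partial j g)) y)"
    by (subst sum.swap) (simp add: partial_commute[OF Nil])
  also have "\<dots> = iter_dir_deriv (b # a # post) g y"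
    by (simp add: sum_distrib_left algebra_simps)
  finally show ?case
    by simp
next
  case (Cons p pre)
  then show ?case
    by (simp add: smooth_partial)
qed

lemma iter_dir_deriv_move_to_end:
  assumes "smooth g"
  shows "iter_dir_deriv (pre @ a # l) g y = iter_dir_deriv (pre @ l @ [a]) g y"
proof (induction l arbitrary: pre)
  case (Cons b l)
  have "iter_dir_deriv (pre @ a # b # l) g y = iter_dir_deriv ((pre @ [b]) @ a # l) g y"
    using iter_dir_deriv_swap[OF assms] by simp
  also have "\<dots> = iter_dir_deriv ((pre @ [b]) @ l @ [a]) g y"
    by (rule Cons.IH)
  finally show ?case
    by simp
qed simp

lemma iter_dir_deriv_perm:
  assumes "smooth g" "mset ws = mset ws'"
  shows "iter_dir_deriv ws g y = iter_dir_deriv ws' g y"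
  using assms
proof (induction ws arbitrary: ws' g)
  case Nil
  then show ?case
    by simp
next
  case (Cons a l)
  then obtain p s where ws': "ws' = p @ a # s"
    by (metis list.set_intros(1) set_mset_mset split_list)
  with Cons.prems have "mset l = mset (p @ s)"
    by simp
  then have "iter_dir_deriv l (partial i g) y = iter_dir_deriv (p @ s) (partial i g) y" for i
    using Cons.IH smooth_partial[OF Cons.prems(1)] by blast
  then have "iter_dir_deriv (a # l) g y = iter_dir_deriv ([] @ a # p @ s) g y"
    by simp
  also have "\<dots> = iter_dir_deriv (p @ a # s) g y"
    using iter_dir_deriv_move_to_end[OF Cons.prems(1)] by (metis append.assoc append_Nil)
  finally show ?case
    using ws' by simp
qed

lemma sum_Suc_choose_mult:
  fixes X :: "nat \<Rightarrow> real"
  shows "(\<Sum>j\<le>Suc n. of_nat (Suc n choose j) * X j) =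
         (\<Sum>j\<le>n. of_nat (n choose j) * X j) + (\<Sum>j\<le>n. of_nat (n choose j) * X (Suc j))"
proof -
  have "(\<Sum>j\<le>Suc n. of_nat (Suc n choose j) * X j)
      = X 0 + (\<Sum>j\<le>n. of_nat (n choose Suc j) * X (Suc j)) + (\<Sum>j\<le>n. of_nat (n choose j) * X (Suc j))"
    by (subst sum.atMost_Suc_shift) (simp add: sum.distrib algebra_simps)
  also have "X 0 + (\<Sum>j\<le>n. of_nat (n choose Suc j) * X (Suc j)) = (\<Sum>j\<le>n. of_nat (n choose j) * X j)"
    using sum.atMost_Suc_shift[of "\<lambda>j. of_nat (n choose j) * X j" n] by (simp add: binomial_eq_0)
  finally show ?thesis .
qed

lemma iter_dir_deriv_binomial:
  assumes g: "smooth g"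
  shows "iter_dir_deriv (pre @ replicate n (u + w)) g y =
     (\<Sum>j\<le>n. of_nat (n choose j) * iter_dir_deriv (pre @ replicate j w @ replicate (n - j) u) g y)"
proof (induction n arbitrary: pre)
  case (Suc n)
  define X where "X j = iter_dir_deriv (pre @ replicate j w @ replicate (Suc n - j) u) g y" for j
  have "iter_dir_deriv (pre @ replicate (Suc n) (u + w)) g y
      = (\<Sum>j\<le>n. of_nat (n choose j) * iter_dir_deriv ((pre @ [u]) @ replicate j w @ replicate (n - j) u) g y)
      + (\<Sum>j\<le>n. of_nat (n choose j) * iter_dir_deriv ((pre @ [w]) @ replicate j w @ replicate (n - j) u) g y)"
    using iter_dir_deriv_add[of pre u w "replicate n (u + w)" g y] Suc.IH[of "pre @ [u]"] Suc.IH[of "pre @ [w]"]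
    by simp
  also have "\<dots> = (\<Sum>j\<le>n. of_nat (n choose j) * X j) + (\<Sum>j\<le>n. of_nat (n choose j) * X (Suc j))"
  proof -
    have "iter_dir_deriv (pre @ u # (replicate j w @ replicate (n - j) u)) g y = X j" if "j \<le> n" for j
      using iter_dir_deriv_move_to_end[OF g, of pre u "replicate j w @ replicate (n - j) u"] that
      by (simp add: X_def Suc_diff_le replicate_append_same)
    then show ?thesis
      by (simp add: X_def)
  qed
  also have "\<dots> = (\<Sum>j\<le>Suc n. of_nat (Suc n choose j) * X j)"
    by (rule sum_Suc_choose_mult[symmetric])
  finally show ?case
    unfolding X_def .
qed simp

lemma iter_dir_deriv_binomial_diff:
  assumes "smooth g"
  shows "iter_dir_deriv (pre @ replicate n (u + w)) g y - iter_dir_deriv (pre @ replicate n u) g y =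
     (\<Sum>j\<in>{1..n}. of_nat (n choose j) * iter_dir_deriv ((pre @ replicate j w) @ replicate (n - j) u) g y)"
  using iter_dir_deriv_binomial[OF assms, of pre n u w y]
  by (simp add: atMost_atLeast0 sum.atLeast_Suc_atMost)

fun fin_diff :: "'a::ab_group_add list \<Rightarrow> ('a \<Rightarrow> real) \<Rightarrow> 'a \<Rightarrow> real" where
  "fin_diff [] h u = h u"
| "fin_diff (w # ws) h u = fin_diff ws h (u + w) - fin_diff ws h u"

lemma fin_diff_diff: "fin_diff ws (\<lambda>u. h1 u - h2 u) u = fin_diff ws h1 u - fin_diff ws h2 u"
  by (induction ws arbitrary: u) simp_all

lemma fin_diff_shift: "fin_diff ws (\<lambda>u. h (u + w)) u = fin_diff ws h (u + w)"
  by (induction ws arbitrary: u) (simp_all add: add_ac)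

lemma fin_diff_Cons_inner: "fin_diff (w # ws) h u = fin_diff ws (\<lambda>u. h (u + w) - h u) u"
  by (simp add: fin_diff_diff fin_diff_shift)

lemma fin_diff_sum: "fin_diff ws (\<lambda>u. \<Sum>j\<in>J. H j u) u = (\<Sum>j\<in>J. fin_diff ws (H j) u)"
  by (induction ws arbitrary: u) (simp_all add: sum_subtractf)

lemma fin_diff_cmult: "fin_diff ws (\<lambda>u. c * h u) u = c * fin_diff ws h u"
  by (induction ws arbitrary: u) (simp_all add: algebra_simps)

lemma abs_fin_diff_le:
  fixes u :: "'a::real_normed_vector"
  assumes "\<And>u'. norm (u' - u) \<le> sum_list (map norm ws) \<Longrightarrow> \<bar>h u'\<bar> \<le> B"
  shows "\<bar>fin_diff ws h u\<bar> \<le> 2 ^ length ws * B"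
  using assms
proof (induction ws arbitrary: u)
  case (Cons w ws)
  have "\<bar>fin_diff ws h (u + w)\<bar> \<le> 2 ^ length ws * B"
  proof (rule Cons.IH)
    fix u' assume "norm (u' - (u + w)) \<le> sum_list (map norm ws)"
    moreover have "norm (u' - u) \<le> norm (u' - (u + w)) + norm w"
      using norm_triangle_ineq[of "u' - (u + w)" w] by (simp add: algebra_simps)
    ultimately show "\<bar>h u'\<bar> \<le> B"
      using Cons.prems by auto
  qed
  moreover have "\<bar>fin_diff ws h u\<bar> \<le> 2 ^ length ws * B"
  proof (rule Cons.IH)
    fix u' assume "norm (u' - u) \<le> sum_list (map norm ws)"
    then have "norm (u' - u) \<le> norm w + sum_list (map norm ws)"
      using norm_ge_zero[of w] by linarith
    then show "\<bar>h u'\<bar> \<le> B"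
      using Cons.prems by simp
  qed
  ultimately show ?case
    by simp
qed simp

lemma fin_diff_iter_dir_deriv_replicate:
  assumes g: "smooth g" and "n \<le> length ws"
  shows "fin_diff ws (\<lambda>u. iter_dir_deriv (pre @ replicate n u) g y) u =
     (if n = length ws then fact n * iter_dir_deriv (pre @ ws) g y else 0)"
  using assms(2)
proof (induction ws arbitrary: n pre u)
  case (Cons w ws)
  have "fin_diff (w # ws) (\<lambda>u. iter_dir_deriv (pre @ replicate n u) g y) u
      = (\<Sum>j\<in>{1..n}. of_nat (n choose j) *
           fin_diff ws (\<lambda>u. iter_dir_deriv ((pre @ replicate j w) @ replicate (n - j) u) g y) u)"
    by (simp only: fin_diff_Cons_inner iter_dir_deriv_binomial_diff[OF g] fin_diff_sum fin_diff_cmult)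
  also have "\<dots> = (\<Sum>j\<in>{1..n}. if j = 1 \<and> n = Suc (length ws)
                     then of_nat n * fact (length ws) * iter_dir_deriv (pre @ w # ws) g y else 0)"
  proof (intro sum.cong refl)
    fix j assume "j \<in> {1..n}"
    then have "n - j \<le> length ws" "n - j = length ws \<longleftrightarrow> j = 1 \<and> n = Suc (length ws)"
      using Cons.prems by auto
    then show "of_nat (n choose j) *
        fin_diff ws (\<lambda>u. iter_dir_deriv ((pre @ replicate j w) @ replicate (n - j) u) g y) u
      = (if j = 1 \<and> n = Suc (length ws)
         then of_nat n * fact (length ws) * iter_dir_deriv (pre @ w # ws) g y else 0)"
      using Cons.IH[of "n - j" "pre @ replicate j w" u] by auto
  qed
  also have "\<dots> = (if n = length (w # ws) then fact n * iter_dir_deriv (pre @ w # ws) g y else 0)"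
    by (auto simp: fact_Suc Suc_le_eq)
  finally show ?case .
qed simp

lemma iter_partial_perm:
  assumes "smooth g" "mset l = mset l'"
  shows "iter_partial l g = iter_partial l' g"
proof
  fix y
  have "mset (map (\<lambda>i. axis i (1::real)) (rev l)) = mset (map (\<lambda>i. axis i 1) (rev l'))"
    using assms(2) by simp
  then show "iter_partial l g y = iter_partial l' g y"
    using iter_dir_deriv_perm[OF assms(1)] iter_dir_deriv_axis by (metis rev_rev_ident)
qed

lemma ex_count_list_eq: "\<exists>l. count_list l = (\<alpha> :: 'n::finite \<Rightarrow> nat)"
proof -
  obtain l where l: "mset l = (\<Sum>j\<in>(UNIV::'n set). replicate_mset (\<alpha> j) j)"
    using ex_mset by blast
  have "count_list l i = \<alpha> i" for i
  proof -
    have "count_list l i = (\<Sum>j\<in>UNIV. count (replicate_mset (\<alpha> j) j) i)"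
      by (simp flip: count_mset add: l count_sum)
    also have "\<dots> = (\<Sum>j\<in>UNIV. if j = i then \<alpha> j else 0)"
      by (intro sum.cong) auto
    finally show ?thesis
      by simp
  qed
  then show ?thesis
    by blast
qed

lemma mi_abs_count_list: "mi_abs (count_list l) = length l"
  unfolding mi_abs_def by (rule sum_count_set) simp_all

lemma partial_alpha_eq_iter_partial:
  assumes "smooth g" "count_list l = \<alpha>"
  shows "partial_alpha \<alpha> g = iter_partial l g"
proof -
  let ?l = "SOME is. \<forall>i. count_list is i = \<alpha> i"
  have "\<forall>i. count_list ?l i = \<alpha> i"
    using someI_ex[of "\<lambda>is. \<forall>i. count_list is i = \<alpha> i"] ex_count_list_eq[of \<alpha>] by metis
  then have "mset ?l = mset l"
    using assms(2) by (intro multiset_eqI) (simp add: count_mset)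
  then show ?thesis
    unfolding partial_alpha_def by (rule iter_partial_perm[OF assms(1)])
qed

lemma abs_iter_dir_deriv_replicate_le:
  assumes "\<And>l. length l = k \<Longrightarrow> \<bar>iter_partial l g x\<bar> \<le> B"
  shows "\<bar>iter_dir_deriv (replicate k v) g x\<bar> \<le> (\<Sum>i\<in>UNIV. \<bar>v$i\<bar>) ^ k * B"
  using assms
proof (induction k arbitrary: g)
  case 0
  then show ?case
    using "0.prems"[of "[]"] by simp
next
  case (Suc k)
  have IH: "\<bar>iter_dir_deriv (replicate k v) (partial i g) x\<bar> \<le> (\<Sum>i\<in>UNIV. \<bar>v$i\<bar>) ^ k * B" for i
    using Suc.IH[of "partial i g"] Suc.prems[of "_ @ [i]"] by (simp add: iter_partial_append)
  have "\<bar>iter_dir_deriv (replicate (Suc k) v) g x\<bar>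
      \<le> (\<Sum>i\<in>UNIV. \<bar>v$i\<bar> * \<bar>iter_dir_deriv (replicate k v) (partial i g) x\<bar>)"
    by (simp add: abs_mult order_trans[OF sum_abs])
  also have "\<dots> \<le> (\<Sum>i\<in>UNIV. \<bar>v$i\<bar> * ((\<Sum>i\<in>UNIV. \<bar>v$i\<bar>) ^ k * B))"
    by (intro sum_mono mult_left_mono IH) simp
  also have "\<dots> = (\<Sum>i\<in>UNIV. \<bar>v$i\<bar>) ^ Suc k * B"
    by (simp add: sum_distrib_right[symmetric])
  finally show ?case .
qed

lemma cond3_imp_cond1:
  fixes g :: "real^'n \<Rightarrow> real"
  assumes g: "smooth g" and N: "\<forall>k. N k > 0" and "cond3 g L N C \<rho>"
  shows "cond1 g L N C (real CARD('n) * \<rho>)"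
proof -
  have C: "C > 0" and \<rho>: "\<rho> > 0"
    and bound: "\<And>x \<alpha>. x \<in> L \<Longrightarrow> \<bar>partial_alpha \<alpha> g x\<bar> \<le> C * \<rho> ^ mi_abs \<alpha> * fact (mi_abs \<alpha>) * N (mi_abs \<alpha>)"
    using assms(3) unfolding cond3_def by auto
  have "\<bar>dir_deriv_k k g v x\<bar> \<le> C * (real CARD('n) * \<rho>) ^ k * fact k * N k"
    if x: "x \<in> L" and v: "v \<in> sphere 0 1" for k x v
  proof -
    let ?B = "C * \<rho> ^ k * fact k * N k"
    have "\<bar>iter_partial l g x\<bar> \<le> ?B" if "length l = k" for l
      using bound[OF x, of "count_list l"] that
      by (simp add: mi_abs_count_list partial_alpha_eq_iter_partial[OF g])
    then have "\<bar>iter_dir_deriv (replicate k v) g x\<bar> \<le> (\<Sum>i\<in>UNIV. \<bar>v$i\<bar>) ^ k * ?B"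
      by (rule abs_iter_dir_deriv_replicate_le)
    also have "\<dots> \<le> real CARD('n) ^ k * ?B"
    proof (intro mult_right_mono power_mono)
      have "(\<Sum>i\<in>UNIV. \<bar>v$i\<bar>) \<le> (\<Sum>i\<in>(UNIV::'n set). 1)"
        using v by (intro sum_mono) (metis component_le_norm_cart mem_sphere_0)
      then show "(\<Sum>i\<in>UNIV. \<bar>v$i\<bar>) \<le> real CARD('n)"
        by simp
    qed (use C \<rho> N in \<open>auto intro: less_imp_le\<close>)
    finally show ?thesis
      by (simp add: dir_deriv_k_eq_iter_dir_deriv[OF g] power_mult_distrib algebra_simps)
  qed
  then show ?thesis
    unfolding cond1_def using C \<rho> by simp
qed

lemma power_self_le_exp_mult_fact: "real k ^ k \<le> exp (real k) * fact k"
proof -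
  have "(\<Sum>n\<in>{k}. real k ^ n /\<^sub>R fact n) \<le> (\<Sum>n. real k ^ n /\<^sub>R fact n)"
    by (intro sum_le_suminf summable_exp_generic) auto
  then have "real k ^ k / fact k \<le> exp (real k)"
    by (simp add: exp_def divide_inverse mult.commute)
  then show ?thesis
    by (simp add: divide_le_eq mult.commute del: of_nat_fact)
qed

lemma le_of_fact_scaled_bound:
  fixes a b c \<delta> :: real
  assumes "fact k * (\<delta> / real k) ^ k * a \<le> c ^ k * fact k * b" "\<delta> > 0" "b \<ge> 0" "c \<ge> 0"
  shows "a \<le> (exp 1 * c / \<delta>) ^ k * fact k * b"
proof -
  \<comment> \<open>for \<open>k = 0\<close> this is \<open>0\<^sup>0 = 1\<close> together with the junk value \<open>\<delta> / 0 = 0\<close>\<close>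
  have "(\<delta> / real k) ^ k * real k ^ k = \<delta> ^ k"
    by (cases "k = 0") (simp_all add: power_mult_distrib[symmetric])
  then have "fact k * \<delta> ^ k * a = (fact k * (\<delta> / real k) ^ k * a) * real k ^ k"
    by (simp add: algebra_simps)
  also have "\<dots> \<le> (c ^ k * fact k * b) * real k ^ k"
    by (intro mult_right_mono assms(1)) simp
  also have "\<dots> \<le> (c ^ k * fact k * b) * (exp 1 ^ k * fact k)"
    using power_self_le_exp_mult_fact[of k] assms(3,4)
    by (intro mult_left_mono) (simp_all add: exp_of_nat_mult[symmetric])
  also have "\<dots> = fact k * \<delta> ^ k * ((exp 1 * c / \<delta>) ^ k * fact k * b)"
    using assms(2) by (simp add: power_mult_distrib power_divide)
  finally show ?thesis
    using assms(2) by (simp del: of_nat_fact)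
qed

lemma abs_iter_dir_deriv_replicate_le_near:
  assumes g: "smooth g" and v0: "norm v0 = 1" and "\<delta> \<le> 1/2" "2 * \<delta> < r"
    and u: "norm (u - v0) \<le> \<delta>"
    and bound: "\<And>w. w \<in> ball v0 r \<inter> sphere 0 1 \<Longrightarrow> \<bar>dir_deriv_k k g w x\<bar> \<le> B"
  shows "\<bar>iter_dir_deriv (replicate k u) g x\<bar> \<le> (1 + \<delta>) ^ k * B"
proof -
  define t where "t = norm u"
  have "\<bar>t - 1\<bar> \<le> \<delta>"
    using norm_triangle_ineq3[of u v0] u v0 by (simp add: t_def)
  then have t: "t \<ge> 1/2" "t \<le> 1 + \<delta>" "\<bar>1 - t\<bar> \<le> \<delta>"
    using assms(3) by auto
  define w where "w = (1 / t) *\<^sub>R u"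
  have nw: "norm w = 1" and uw: "u = t *\<^sub>R w"
    using t by (auto simp: w_def t_def)
  have "u - w = (t - 1) *\<^sub>R w"
    by (simp add: uw algebra_simps)
  then have "norm (u - w) = \<bar>1 - t\<bar>"
    using nw by simp
  then have "norm (v0 - w) \<le> 2 * \<delta>"
    using t u norm_triangle_ineq[of "v0 - u" "u - w"] by (simp add: norm_minus_commute)
  then have "w \<in> ball v0 r \<inter> sphere 0 1"
    using assms(4) nw by (simp add: dist_norm)
  then have bw: "\<bar>iter_dir_deriv (replicate k w) g x\<bar> \<le> B"
    using bound by (simp add: dir_deriv_k_eq_iter_dir_deriv[OF g, symmetric])
  have "iter_dir_deriv (replicate k u) g x = t ^ k * iter_dir_deriv (replicate k w) g x"
    using iter_dir_deriv_map_scaleR[of t "replicate k w"] by (simp add: uw map_replicate)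
  then have "\<bar>iter_dir_deriv (replicate k u) g x\<bar> = t ^ k * \<bar>iter_dir_deriv (replicate k w) g x\<bar>"
    using t by (simp add: abs_mult)
  also have "\<dots> \<le> (1 + \<delta>) ^ k * B"
    using t bw by (intro mult_mono power_mono) auto
  finally show ?thesis .
qed

lemma abs_iter_partial_le_polarization:
  assumes g: "smooth g" and "0 \<le> s"
    and bound: "\<And>u. norm (u - v0) \<le> real (length l) * s \<Longrightarrow>
                   \<bar>iter_dir_deriv (replicate (length l) u) g x\<bar> \<le> A"
  shows "fact (length l) * s ^ length l * \<bar>iter_partial l g x\<bar> \<le> 2 ^ length l * A"
proof -
  define ws where "ws = map ((*\<^sub>R) s) (map (\<lambda>i. axis i (1::real)) (rev l))"
  have "fin_diff ws (\<lambda>u. iter_dir_deriv (replicate (length l) u) g x) v0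
      = fact (length l) * iter_dir_deriv ws g x"
    using fin_diff_iter_dir_deriv_replicate[OF g, of "length l" ws "[]" x v0] by (simp add: ws_def)
  also have "iter_dir_deriv ws g x = s ^ length l * iter_partial l g x"
    unfolding ws_def iter_dir_deriv_map_scaleR iter_dir_deriv_axis by simp
  finally have "fact (length l) * s ^ length l * \<bar>iter_partial l g x\<bar>
      = \<bar>fin_diff ws (\<lambda>u. iter_dir_deriv (replicate (length l) u) g x) v0\<bar>"
    using \<open>0 \<le> s\<close> by (simp add: abs_mult)
  also have "\<dots> \<le> 2 ^ length ws * A"
  proof (rule abs_fin_diff_le)
    have "sum_list (map norm ws) = real (length l) * s"
      using \<open>0 \<le> s\<close> by (simp add: ws_def o_def sum_list_triv)
    then show "\<bar>iter_dir_deriv (replicate (length l) u) g x\<bar> \<le> A"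
      if "norm (u - v0) \<le> sum_list (map norm ws)" for u
      using bound that by simp
  qed
  finally show ?thesis
    by (simp add: ws_def)
qed

definition cone_margin :: "real \<Rightarrow> real" where
  "cone_margin r = min (r / 4) (1 / 2)"

definition cond3_rho :: "real \<Rightarrow> real \<Rightarrow> real" where
  "cond3_rho r \<rho> = exp 1 * (2 * (1 + cone_margin r) * \<rho>) / cone_margin r"

lemma cond2_imp_cond3:
  assumes g: "smooth g" and N: "\<forall>k. N k > 0" and "cond2 g L N v0 r C \<rho>"
  shows "cond3 g L N C (cond3_rho r \<rho>)"
proof -
  have v0: "norm v0 = 1" and r: "r > 0" and C: "C > 0" and \<rho>: "\<rho> > 0"
    and bound: "\<And>k x w. x \<in> L \<Longrightarrow> w \<in> ball v0 r \<inter> sphere 0 1 \<Longrightarrow>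
                  \<bar>dir_deriv_k k g w x\<bar> \<le> C * \<rho> ^ k * fact k * N k"
    using assms(3) unfolding cond2_def by auto
  define \<delta> where "\<delta> = cone_margin r"
  have \<delta>: "\<delta> > 0" "\<delta> \<le> 1/2" "2 * \<delta> < r"
    using r by (auto simp: \<delta>_def cone_margin_def)
  have "\<bar>iter_partial l g x\<bar> \<le> C * cond3_rho r \<rho> ^ length l * fact (length l) * N (length l)"
    if x: "x \<in> L" for l x
  proof -
    define k where "k = length l"
    have "\<bar>iter_dir_deriv (replicate k u) g x\<bar> \<le> (1 + \<delta>) ^ k * (C * \<rho> ^ k * fact k * N k)"
      if "norm (u - v0) \<le> real k * (\<delta> / real k)" for u
    proof (rule abs_iter_dir_deriv_replicate_le_near[OF g v0 \<delta>(2,3)])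
      show "norm (u - v0) \<le> \<delta>"
        using that \<delta>(1) by (cases "k = 0") auto
    qed (rule bound[OF x])
    then have "fact k * (\<delta> / real k) ^ k * \<bar>iter_partial l g x\<bar>
        \<le> 2 ^ k * ((1 + \<delta>) ^ k * (C * \<rho> ^ k * fact k * N k))"
      using abs_iter_partial_le_polarization[OF g, of "\<delta> / real k" v0 l x] \<delta>(1) by (simp add: k_def)
    also have "\<dots> = (2 * (1 + \<delta>) * \<rho>) ^ k * fact k * (C * N k)"
      unfolding power_mult_distrib by (simp only: mult_ac)
    finally have "\<bar>iter_partial l g x\<bar> \<le> (exp 1 * (2 * (1 + \<delta>) * \<rho>) / \<delta>) ^ k * fact k * (C * N k)"
      using \<delta>(1) C N \<rho> by (intro le_of_fact_scaled_bound) (auto intro: less_imp_le)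
    then show ?thesis
      by (simp add: k_def cond3_rho_def \<delta>_def algebra_simps)
  qed
  moreover have "cond3_rho r \<rho> > 0"
    using \<delta>(1) \<rho> by (simp add: cond3_rho_def \<delta>_def[symmetric])
  ultimately show ?thesis
    unfolding cond3_def using C ex_count_list_eq partial_alpha_eq_iter_partial[OF g] mi_abs_count_list
    by metis
qed

lemma cond1_imp_cond2: "cond1 g L N C \<rho> \<Longrightarrow> cond2 g L N (axis i 1) 1 C \<rho>"
  unfolding cond1_def cond2_def by (auto simp: norm_axis_1)

theorem proposition7p2:
  fixes f :: "real^'n \<Rightarrow> real" and K :: "(real^'n) set" and M :: "nat \<Rightarrow> real"
  assumes "smooth f" and "compact K" and "\<forall>k. M k > 0"
  shows "((\<exists>C \<rho>. cond1 f K M C \<rho>) \<longleftrightarrow> (\<exists>v0 r C \<rho>. cond2 f K M v0 r C \<rho>))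
       \<and> ((\<exists>C \<rho>. cond1 f K M C \<rho>) \<longleftrightarrow> (\<exists>C \<rho>. cond3 f K M C \<rho>))
       \<and> (\<exists>\<Phi>21 :: real \<Rightarrow> real \<Rightarrow> real \<Rightarrow> real \<times> real.
          \<exists>\<Phi>13 \<Phi>31 :: real \<Rightarrow> real \<Rightarrow> real \<times> real.
           (\<forall>(g :: real^'n \<Rightarrow> real) L N v0 r C \<rho>. smooth g \<longrightarrow> compact L \<longrightarrow> (\<forall>k. N k > 0) \<longrightarrow>
               cond2 g L N v0 r C \<rho> \<longrightarrow> cond1 g L N (fst (\<Phi>21 r C \<rho>)) (snd (\<Phi>21 r C \<rho>)))
         \<and> (\<forall>(g :: real^'n \<Rightarrow> real) L N C \<rho>. smooth g \<longrightarrow> compact L \<longrightarrow> (\<forall>k. N k > 0) \<longrightarrow>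
               cond1 g L N C \<rho> \<longrightarrow> cond3 g L N (fst (\<Phi>13 C \<rho>)) (snd (\<Phi>13 C \<rho>)))
         \<and> (\<forall>(g :: real^'n \<Rightarrow> real) L N C \<rho>. smooth g \<longrightarrow> compact L \<longrightarrow> (\<forall>k. N k > 0) \<longrightarrow>
               cond3 g L N C \<rho> \<longrightarrow> cond1 g L N (fst (\<Phi>31 C \<rho>)) (snd (\<Phi>31 C \<rho>))))"
proof -
  have cond2_imp_cond1: "cond1 g L N C (real CARD('n) * cond3_rho r \<rho>)"
    if "smooth g" "\<forall>k. N k > 0" "cond2 g L N v0 r C \<rho>" for g :: "real^'n \<Rightarrow> real" and L N v0 r C \<rho>
    using cond3_imp_cond1[OF that(1,2) cond2_imp_cond3[OF that]] .
  have cond1_imp_cond3: "cond3 g L N C (cond3_rho 1 \<rho>)"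
    if "smooth g" "\<forall>k. N k > 0" "cond1 g L N C \<rho>" for g :: "real^'n \<Rightarrow> real" and L N C \<rho>
    using cond2_imp_cond3[OF that(1,2) cond1_imp_cond2[OF that(3)]] .
  show ?thesis
  proof (intro conjI)
    show "(\<exists>C \<rho>. cond1 f K M C \<rho>) \<longleftrightarrow> (\<exists>v0 r C \<rho>. cond2 f K M v0 r C \<rho>)"
      using cond1_imp_cond2 cond2_imp_cond1[OF assms(1,3)] by blast
    show "(\<exists>C \<rho>. cond1 f K M C \<rho>) \<longleftrightarrow> (\<exists>C \<rho>. cond3 f K M C \<rho>)"
      using cond1_imp_cond3[OF assms(1,3)] cond3_imp_cond1[OF assms(1,3)] by blast
  qed (rule exI[of _ "\<lambda>r C \<rho>. (C, real CARD('n) * cond3_rho r \<rho>)"],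
       rule exI[of _ "\<lambda>C \<rho>. (C, cond3_rho 1 \<rho>)"],
       rule exI[of _ "\<lambda>C \<rho>. (C, real CARD('n) * \<rho>)"],
       use cond2_imp_cond1 cond1_imp_cond3 cond3_imp_cond1 in auto)
qed

end
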